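(* Let $\Gamma$ be a 3-colex and $E=\prod_{\nu\in\Omega}X_\nu$ an $X$-type error on the 3D color code on $\Gamma$. Suppose that for each color $c\in\{r,b,g,y\}$, $\mathsf F_c$ is a set of faces of $\Gamma^{*\setminus c}$ such that $\prod_{f\in\mathsf F_c}X_f=\pi_c(E)\,S_c$ for some $X$-stabilizer $S_c$ of the 3D toric code on $\Gamma^{*\setminus c}$ (i.e. $\pi_c(E)$ is estimated up to a stabilizer on $\Gamma^{*\setminus c}$). Then $\mathsf F=\bigcup_c\mathsf F_c$ equals $\partial(E S)$ for some $X$-stabilizer $S$ of the color code; that is, $\mathsf F$ is an estimate of $\partial E$ up to the boundary of an $X$-stabilizer of the color code.
   Context: Colors are $\{r,b,g,y\}$. A 3-colex $\Gamma$ is a 3-dimensional cell complex without boundary in which every vertex is 4-valent and lies in exactly four 3-cells, and whose 3-cells are properly 4-colored: every face lies in exactly two 3-cells, which have different colors. The dual complex $\Gamma^*$ has an $i$-cell for every $(3-i)$-cell of $\Gamma$, with incidences reversed; every 3-cell of $\Gamma^*$ is a tetrahedron. A vertex of $\Gamma^*$ is given the color of the corresponding 3-cell of $\Gamma$, so the four vertices of each tetrahedron have distinct colors. A face of $\Gamma^*$ is a $c$-face if none of its vertices has color $c$; each tetrahedron $\nu$ has a unique $c$-face $\pi_c(\nu)$. The 3D color code on $\Gamma$ has one qubit per tetrahedron of $\Gamma^*$, $X$-stabilizer generators $B^X_v=\prod_{\nu\ni v}X_\nu$ for vertices $v$ of $\Gamma^*$, and $Z$-stabilizer generators $B^Z_e=\prod_{\nu\supset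 e}Z_\nu$ for edges $e$; $X$-stabilizers are products of the $B^X_v$. The minor complex $\Gamma^{*\setminus c}$ is obtained from $\Gamma^*$ by deleting all vertices of color $c$ together with all edges and faces incident to them; its faces are the $c$-faces of $\Gamma^*$, and its 3-cells are obtained by merging, for each $c$-vertex $v$, all tetrahedra containing $v$ into one 3-cell. The 3D toric code on $\Gamma^{*\setminus c}$ has qubits on faces and $X$-stabilizer generators $\prod_{f\in\partial\mu}X_f$ for 3-cells $\mu$; its $X$-stabilizers are products of these. Operators are mapped by $\pi_c(\prod_{\nu\in\Omega}X_\nu)=\prod_{\nu\in\Omega}X_{\pi_c(\nu)}$ (with $X_f^2=I$). For an $X$-operator $E=\prod_{\nu\in\Omega}X_\nu$ on the color code, its boundary is $\partial E=\sum_{\nu\in\Omega}\partial\nu$, where $\partial\nu$ is the set of four faces of $\nu$ and the sum is the mod-2 sum (symmetric difference) of sets of faces. *)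

theory Defs
  imports Main
begin

datatype color = Red | Blue | Green | Yellow

definition msum :: "'a set \<Rightarrow> ('a \<Rightarrow> 'b set) \<Rightarrow> 'b set" where
  "msum A g = {x. odd (card {a \<in> A. x \<in> g a})}"

definition sdiff :: "'a set \<Rightarrow> 'a set \<Rightarrow> 'a set" where
  "sdiff A B = (A - B) \<union> (B - A)"

text \<open>Group generated (under symmetric difference, i.e. products of X-operators) by a set of supports.\<close>
inductive_set xspan :: "'a set set \<Rightarrow> 'a set set" for gens :: "'a set set" where
  empty: "{} \<in> xspan gens"
| step: "A \<in> xspan gens \<Longrightarrow> g \<in> gens \<Longrightarrow> sdiff A g \<in> xspan gens"

text \<open>The dual complex of a 3-colex: vertices V (coloured by col), faces Fs (triangles),
  tetrahedra T.\<close>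
locale colex_dual =
  fixes V :: "'v set" and Fs :: "'f set" and T :: "'t set"
    and col :: "'v \<Rightarrow> color"
    and tverts :: "'t \<Rightarrow> 'v set" and fverts :: "'f \<Rightarrow> 'v set" and tfaces :: "'t \<Rightarrow> 'f set"
  assumes fin_V: "finite V" and fin_F: "finite Fs" and fin_T: "finite T"
    and tverts_sub: "\<And>t. t \<in> T \<Longrightarrow> tverts t \<subseteq> V"
    and tverts_card: "\<And>t. t \<in> T \<Longrightarrow> card (tverts t) = 4"
    and tverts_colors: "\<And>t. t \<in> T \<Longrightarrow> inj_on col (tverts t)"
    and tfaces_sub: "\<And>t. t \<in> T \<Longrightarrow> tfaces t \<subseteq> Fs"
    and tfaces_card: "\<And>t. t \<in> T \<Longrightarrow> card (tfaces t) = 4"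
    and tfaces_inj: "\<And>t. t \<in> T \<Longrightarrow> inj_on fverts (tfaces t)"
    and face_in_tet: "\<And>t f. t \<in> T \<Longrightarrow> f \<in> tfaces t \<Longrightarrow> fverts f \<subseteq> tverts t"
    and fverts_sub: "\<And>f. f \<in> Fs \<Longrightarrow> fverts f \<subseteq> V"
    and fverts_card: "\<And>f. f \<in> Fs \<Longrightarrow> card (fverts f) = 3"
    and face_two_tets: "\<And>f. f \<in> Fs \<Longrightarrow> card {t \<in> T. f \<in> tfaces t} = 2"

definition cfaces :: "'f set \<Rightarrow> ('v \<Rightarrow> color) \<Rightarrow> ('f \<Rightarrow> 'v set) \<Rightarrow> color \<Rightarrow> 'f set" where
  "cfaces Fs col fverts c = {f \<in> Fs. c \<notin> col ` fverts f}"

definition pi_face :: "('v \<Rightarrow> color) \<Rightarrow> ('f \<Rightarrow> 'v set) \<Rightarrow> ('t \<Rightarrow> 'f set) \<Rightarrow> color \<Rightarrow> 't \<Rightarrow> 'f" where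
  "pi_face col fverts tfaces c t = (THE f. f \<in> tfaces t \<and> c \<notin> col ` fverts f)"

definition pi_op :: "('v \<Rightarrow> color) \<Rightarrow> ('f \<Rightarrow> 'v set) \<Rightarrow> ('t \<Rightarrow> 'f set) \<Rightarrow> color \<Rightarrow> 't set \<Rightarrow> 'f set" where
  "pi_op col fverts tfaces c \<Omega> = msum \<Omega> (\<lambda>t. {pi_face col fverts tfaces c t})"

text \<open>X-stabilizers of the color code: generated by the supports of B^X_v.\<close>
definition color_stabs :: "'v set \<Rightarrow> 't set \<Rightarrow> ('t \<Rightarrow> 'v set) \<Rightarrow> 't set set" where
  "color_stabs V T tverts = xspan ((\<lambda>v. {t \<in> T. v \<in> tverts t}) ` V)"

text \<open>Boundary of the 3-cell of the minor complex obtained by merging the tetrahedra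
  around the c-vertex v: the mod-2 sum of their c-faces.\<close>
definition minor_cell_bdry :: "'t set \<Rightarrow> ('v \<Rightarrow> color) \<Rightarrow> ('t \<Rightarrow> 'v set) \<Rightarrow> ('f \<Rightarrow> 'v set) \<Rightarrow> ('t \<Rightarrow> 'f set) \<Rightarrow> color \<Rightarrow> 'v \<Rightarrow> 'f set" where
  "minor_cell_bdry T col tverts fverts tfaces c v =
     msum {t \<in> T. v \<in> tverts t} (\<lambda>t. {pi_face col fverts tfaces c t})"

definition toric_stabs :: "'v set \<Rightarrow> 't set \<Rightarrow> ('v \<Rightarrow> color) \<Rightarrow> ('t \<Rightarrow> 'v set) \<Rightarrow> ('f \<Rightarrow> 'v set) \<Rightarrow> ('t \<Rightarrow> 'f set) \<Rightarrow> color \<Rightarrow> 'f set set" where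
  "toric_stabs V T col tverts fverts tfaces c =
     xspan (minor_cell_bdry T col tverts fverts tfaces c ` {v \<in> V. col v = c})"

definition bdry :: "('t \<Rightarrow> 'f set) \<Rightarrow> 't set \<Rightarrow> 'f set" where
  "bdry tfaces \<Omega> = msum \<Omega> tfaces"

end

theory Submission
  imports Defs
begin

text \<open>Every tetrahedron carries all four colours, so each of its faces misses exactly one colour
  and, for each colour c, exactly one of its faces is a c-face. Hence the c-faces of
  \<open>\<partial>E\<close> are precisely the faces of \<open>\<pi>\<^sub>c(E)\<close>, the face sets of the four minor complexes
  partition the faces, and the boundary of a vertex stabilizer \<open>B\<^sup>X\<^sub>v\<close> of colour c is the
  boundary of the merged 3-cell of v (faces through v occur twice and cancel). Thus every
  toric-code stabilizer \<open>S\<^sub>c\<close> is the boundary of a colour-code stabilizer \<open>S'\<^sub>c\<close>, and with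
  \<open>S = \<Prod>\<^sub>c S'\<^sub>c\<close> the c-faces of \<open>\<partial>(E S)\<close> are exactly those of \<open>\<pi>\<^sub>c(E) S\<^sub>c\<close>, i.e. \<open>F\<^sub>c\<close>.\<close>

lemma mem_sdiff: "x \<in> sdiff A B \<longleftrightarrow> (x \<in> A) \<noteq> (x \<in> B)"
  unfolding sdiff_def by auto

lemma sdiff_assoc: "sdiff (sdiff A B) C = sdiff A (sdiff B C)"
  unfolding sdiff_def by auto

lemma sdiff_empty [simp]: "sdiff A {} = A" "sdiff {} A = A"
  unfolding sdiff_def by auto

lemma sdiff_Int_distrib: "sdiff A B \<inter> C = sdiff (A \<inter> C) (B \<inter> C)"
  unfolding sdiff_def by auto

lemma finite_sdiff: "finite A \<Longrightarrow> finite B \<Longrightarrow> finite (sdiff A B)"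
  unfolding sdiff_def by simp

lemma odd_card_sdiff:
  assumes "finite A" "finite B"
  shows "odd (card (sdiff A B)) \<longleftrightarrow> odd (card A) \<noteq> odd (card B)"
proof -
  have "card A = card (A \<inter> B) + card (A - B)" "card B = card (A \<inter> B) + card (B - A)"
    using card_Int_Diff[OF assms(1), of B] card_Int_Diff[OF assms(2), of A]
    by (simp_all add: Int_commute)
  moreover have "card (sdiff A B) = card (A - B) + card (B - A)"
    unfolding sdiff_def using assms by (simp add: card_Un_disjnt disjnt_Diff2)
  ultimately show ?thesis by auto
qed

lemma msum_sdiff:
  assumes "finite A" "finite B"
  shows "msum (sdiff A B) g = sdiff (msum A g) (msum B g)"
proof (rule set_eqI)
  fix x
  have "{a \<in> sdiff A B. x \<in> g a} = sdiff {a \<in> A. x \<in> g a} {a \<in> B. x \<in> g a}"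
    unfolding sdiff_def by auto
  then show "x \<in> msum (sdiff A B) g \<longleftrightarrow> x \<in> sdiff (msum A g) (msum B g)"
    unfolding msum_def mem_sdiff using assms by (simp add: odd_card_sdiff)
qed

lemma msum_subset: "msum A g \<subseteq> (\<Union>a\<in>A. g a)"
proof
  fix x assume x: "x \<in> msum A g"
  have "{a \<in> A. x \<in> g a} \<noteq> {}"
  proof
    assume "{a \<in> A. x \<in> g a} = {}"
    then have "card {a \<in> A. x \<in> g a} = 0" by (simp only: card.empty)
    with x show False unfolding msum_def by simp
  qed
  then show "x \<in> (\<Union>a\<in>A. g a)" by blast
qed

lemma xspan_sdiff:
  assumes "A \<in> xspan G" "B \<in> xspan G"
  shows "sdiff A B \<in> xspan G"
  using assms(2)
proof induction
  case (step B g)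
  then show ?case by (simp add: xspan.step flip: sdiff_assoc)
qed (use assms(1) in simp)

lemma xspan_subset: "A \<in> xspan G \<Longrightarrow> (\<And>g. g \<in> G \<Longrightarrow> g \<subseteq> U) \<Longrightarrow> A \<subseteq> U"
  by (induction A rule: xspan.induct) (auto simp: sdiff_def)

lemma xspan_mono:
  assumes "G \<subseteq> H"
  shows "xspan G \<subseteq> xspan H"
proof
  fix A assume "A \<in> xspan G"
  then show "A \<in> xspan H" by induction (use assms in \<open>auto intro: xspan.intros\<close>)
qed

lemma xspan_image_subset:
  assumes "h {} = {}" and "\<And>A g. A \<in> xspan G \<Longrightarrow> g \<in> G \<Longrightarrow> h (sdiff A g) = sdiff (h A) (h g)"
  shows "xspan (h ` G) \<subseteq> h ` xspan G"
proof
  fix B assume "B \<in> xspan (h ` G)"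
  then show "B \<in> h ` xspan G"
  proof (induction B rule: xspan.induct)
    case empty
    show ?case using assms(1) xspan.empty by (intro image_eqI[of _ _ "{}"]) simp_all
  next
    case (step B g')
    then obtain A g where "A \<in> xspan G" "B = h A" "g \<in> G" "g' = h g" by blast
    then have "sdiff B g' = h (sdiff A g)" "sdiff A g \<in> xspan G"
      using assms(2) xspan.step by simp_all
    then show ?case by blast
  qed
qed

lemma UNIV_color: "(UNIV :: color set) = {Red, Blue, Green, Yellow}"
  using color.exhaust by auto

lemma finite_UNIV_color: "finite (UNIV :: color set)"
  unfolding UNIV_color by simp

lemma card_UNIV_color: "card (UNIV :: color set) = 4"
  unfolding UNIV_color by simp

lemma bdry_sdiff:
  "finite A \<Longrightarrow> finite B \<Longrightarrow> bdry tfaces (sdiff A B) = sdiff (bdry tfaces A) (bdry tfaces B)"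
  unfolding bdry_def by (rule msum_sdiff)

definition color_sum :: "(color \<Rightarrow> 'a set) \<Rightarrow> 'a set" where
  "color_sum S = sdiff (sdiff (S Red) (S Blue)) (sdiff (S Green) (S Yellow))"

lemma color_sum_in_xspan: "(\<And>c. S c \<in> xspan G) \<Longrightarrow> color_sum S \<in> xspan G"
  unfolding color_sum_def by (intro xspan_sdiff)

lemma bdry_color_sum:
  "(\<And>c. finite (S c)) \<Longrightarrow> bdry tfaces (color_sum S) = color_sum (\<lambda>c. bdry tfaces (S c))"
  unfolding color_sum_def by (simp add: bdry_sdiff finite_sdiff)

lemma color_sum_Int_disjoint:
  assumes "\<And>c. S c \<subseteq> C c" and "\<And>c c'. c \<noteq> c' \<Longrightarrow> C c \<inter> C c' = {}"
  shows "color_sum S \<inter> C c = S c"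
proof -
  have "S c' \<inter> C c = (if c' = c then S c else {})" for c'
    using assms(1)[of c'] assms(2)[of c' c] by auto
  then show ?thesis
    unfolding color_sum_def sdiff_Int_distrib by (cases c) simp_all
qed

context colex_dual
begin

abbreviation "pf \<equiv> pi_face col fverts tfaces"

abbreviation vstar :: "'v \<Rightarrow> 't set" where
  "vstar v \<equiv> {t \<in> T. v \<in> tverts t}"

lemma finite_tverts: "t \<in> T \<Longrightarrow> finite (tverts t)"
  using tverts_card[of t] by (intro card_ge_0_finite) simp

lemma colors_of_tet:
  assumes "t \<in> T"
  shows "col ` tverts t = UNIV"
proof (rule card_subset_eq[OF finite_UNIV_color subset_UNIV])
  show "card (col ` tverts t) = card (UNIV :: color set)"
    using card_image[OF tverts_colors[OF assms]] tverts_card[OF assms] card_UNIV_color by simp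
qed

lemma inj_on_fverts_col: "t \<in> T \<Longrightarrow> f \<in> tfaces t \<Longrightarrow> inj_on col (fverts f)"
  by (rule inj_on_subset[OF tverts_colors face_in_tet])

lemma face_of_tet_eq_Diff:
  assumes t: "t \<in> T" and f: "f \<in> tfaces t" and v: "v \<in> tverts t" "v \<notin> fverts f"
  shows "fverts f = tverts t - {v}"
proof (rule card_subset_eq)
  show "fverts f \<subseteq> tverts t - {v}" using face_in_tet[OF t f] v(2) by blast
  show "card (fverts f) = card (tverts t - {v})"
    using fverts_card tfaces_sub[OF t] f tverts_card[OF t] finite_tverts[OF t] v(1) by auto
qed (use finite_tverts[OF t] in simp)

text \<open>Four faces with distinct vertex sets cannot all be among the three triangles through v.\<close>
lemma tet_face_avoiding:
  assumes t: "t \<in> T" and v: "v \<in> tverts t"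
  shows "\<exists>f \<in> tfaces t. v \<notin> fverts f"
proof (rule ccontr)
  assume all: "\<not> ?thesis"
  have "fverts ` tfaces t \<subseteq> (\<lambda>w. tverts t - {w}) ` (tverts t - {v})"
  proof (rule image_subsetI)
    fix f assume f: "f \<in> tfaces t"
    have "fverts f \<noteq> tverts t"
      using fverts_card tfaces_sub[OF t] f tverts_card[OF t] by force
    then obtain w where "w \<in> tverts t" "w \<notin> fverts f"
      using face_in_tet[OF t f] by blast
    then show "fverts f \<in> (\<lambda>w. tverts t - {w}) ` (tverts t - {v})"
      using face_of_tet_eq_Diff[OF t f] all f by blast
  qed
  then have "card (fverts ` tfaces t) \<le> card (tverts t - {v})"
    using finite_tverts[OF t] by (meson card_image_le card_mono finite_Diff finite_imageI order_trans)
  moreover have "card (fverts ` tfaces t) = 4"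
    using card_image[OF tfaces_inj[OF t]] tfaces_card[OF t] by simp
  ultimately show False using tverts_card[OF t] finite_tverts[OF t] v by simp
qed

lemma pi_face_iff:
  assumes t: "t \<in> T"
  shows "f \<in> tfaces t \<and> c \<notin> col ` fverts f \<longleftrightarrow> f = pf c t"
proof -
  obtain v where v: "v \<in> tverts t" "col v = c"
    using colors_of_tet[OF t] by (metis UNIV_I imageE)
  have avoid: "c \<notin> col ` fverts f \<longleftrightarrow> v \<notin> fverts f" if "f \<in> tfaces t" for f
    using inj_on_image_mem_iff[OF tverts_colors[OF t] v(1) face_in_tet[OF t that]] v(2) by simp
  have ex1: "\<exists>!f. f \<in> tfaces t \<and> c \<notin> col ` fverts f"
  proof (rule ex_ex1I)
    show "\<exists>f. f \<in> tfaces t \<and> c \<notin> col ` fverts f"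
      using tet_face_avoiding[OF t v(1)] avoid by blast
  next
    fix f g
    assume f: "f \<in> tfaces t \<and> c \<notin> col ` fverts f" and g: "g \<in> tfaces t \<and> c \<notin> col ` fverts g"
    then have "v \<notin> fverts f" "v \<notin> fverts g"
      using avoid by blast+
    then have "fverts f = fverts g"
      using f g by (simp add: face_of_tet_eq_Diff[OF t _ v(1)])
    then show "f = g"
      using inj_onD[OF tfaces_inj[OF t]] f g by simp
  qed
  show ?thesis
    unfolding pi_face_def
  proof
    assume "f \<in> tfaces t \<and> c \<notin> col ` fverts f"
    then show "f = (THE f. f \<in> tfaces t \<and> c \<notin> col ` fverts f)"
      by (rule the1_equality[OF ex1, symmetric])
  next
    assume "f = (THE f. f \<in> tfaces t \<and> c \<notin> col ` fverts f)"
    with theI'[OF ex1] show "f \<in> tfaces t \<and> c \<notin> col ` fverts f" by (simp only: simp_thms)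
  qed
qed

lemma pi_face_in_cfaces:
  assumes "t \<in> T"
  shows "pf c t \<in> cfaces Fs col fverts c"
  using pi_face_iff[OF assms, of "pf c t" c] tfaces_sub[OF assms] unfolding cfaces_def by blast

lemma face_in_some_tet:
  assumes "f \<in> Fs"
  shows "\<exists>t \<in> T. f \<in> tfaces t"
proof (rule ccontr)
  assume "\<not> ?thesis"
  then have "{t \<in> T. f \<in> tfaces t} = {}" by blast
  with face_two_tets[OF assms] show False by simp
qed

lemma card_missing_colors:
  assumes "f \<in> Fs"
  shows "card (UNIV - col ` fverts f) = 1"
proof -
  obtain t where "t \<in> T" "f \<in> tfaces t" using face_in_some_tet[OF assms] by blast
  then have "card (col ` fverts f) = 3"
    using card_image[OF inj_on_fverts_col] fverts_card[OF assms] by metis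
  moreover have "finite (col ` fverts f)"
    using \<open>card (col ` fverts f) = 3\<close> by (intro card_ge_0_finite) simp
  ultimately show ?thesis
    by (simp add: card_Diff_subset card_UNIV_color)
qed

lemma missing_color_exists:
  assumes "f \<in> Fs"
  shows "\<exists>c. c \<notin> col ` fverts f"
proof -
  obtain c where "UNIV - col ` fverts f = {c}"
    using card_missing_colors[OF assms] by (rule card_1_singletonE)
  then have "c \<in> UNIV - col ` fverts f" by simp
  then show ?thesis by blast
qed

lemma missing_color_unique:
  assumes "f \<in> Fs" "c \<notin> col ` fverts f" "c' \<notin> col ` fverts f"
  shows "c = c'"
proof -
  obtain d where d: "UNIV - col ` fverts f = {d}"
    using card_missing_colors[OF assms(1)] by (rule card_1_singletonE)
  have "c \<in> UNIV - col ` fverts f" "c' \<in> UNIV - col ` fverts f"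
    using assms(2,3) by simp_all
  then show ?thesis unfolding d by simp
qed

lemma cfaces_disjoint: "c \<noteq> c' \<Longrightarrow> cfaces Fs col fverts c \<inter> cfaces Fs col fverts c' = {}"
  unfolding cfaces_def using missing_color_unique by blast

lemma Union_cfaces: "(\<Union>c. cfaces Fs col fverts c) = Fs"
  unfolding cfaces_def using missing_color_exists by blast

lemma bdry_subset_faces: "\<Omega> \<subseteq> T \<Longrightarrow> bdry tfaces \<Omega> \<subseteq> Fs"
  unfolding bdry_def by (rule subset_trans[OF msum_subset]) (use tfaces_sub in blast)

lemma bdry_Int_cfaces:
  assumes "\<Omega> \<subseteq> T"
  shows "bdry tfaces \<Omega> \<inter> cfaces Fs col fverts c = pi_op col fverts tfaces c \<Omega>"
proof (rule set_eqI)
  fix x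
  have "{t \<in> \<Omega>. x \<in> tfaces t} = {t \<in> \<Omega>. x \<in> {pf c t}}" if "x \<in> cfaces Fs col fverts c"
    using that assms pi_face_iff unfolding cfaces_def by blast
  moreover have "x \<in> cfaces Fs col fverts c" if "x \<in> pi_op col fverts tfaces c \<Omega>"
    using that msum_subset[of \<Omega> "\<lambda>t. {pf c t}"] assms pi_face_in_cfaces
    unfolding pi_op_def by blast
  ultimately show "x \<in> bdry tfaces \<Omega> \<inter> cfaces Fs col fverts c \<longleftrightarrow> x \<in> pi_op col fverts tfaces c \<Omega>"
    unfolding bdry_def pi_op_def msum_def by auto
qed

text \<open>Every tetrahedron at a face through v contains v, so such a face lies in exactly two
  tetrahedra of the star and cancels.\<close>
lemma bdry_vstar_subset_cfaces: "bdry tfaces (vstar v) \<subseteq> cfaces Fs col fverts (col v)"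
proof
  fix x assume x: "x \<in> bdry tfaces (vstar v)"
  then obtain t where t: "t \<in> T" "v \<in> tverts t" "x \<in> tfaces t"
    using msum_subset[of "vstar v" tfaces] unfolding bdry_def by blast
  have "v \<notin> fverts x"
  proof
    assume "v \<in> fverts x"
    then have "{t \<in> vstar v. x \<in> tfaces t} = {t \<in> T. x \<in> tfaces t}"
      using face_in_tet by blast
    then have "card {t \<in> vstar v. x \<in> tfaces t} = 2"
      using face_two_tets tfaces_sub[OF t(1)] t(3) by auto
    with x show False unfolding bdry_def msum_def by simp
  qed
  then show "x \<in> cfaces Fs col fverts (col v)"
    using inj_on_image_mem_iff[OF tverts_colors[OF t(1)] t(2) face_in_tet[OF t(1,3)]]
      tfaces_sub[OF t(1)] t(3) unfolding cfaces_def by blast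
qed

lemma bdry_vstar: "bdry tfaces (vstar v) = minor_cell_bdry T col tverts fverts tfaces (col v) v"
  using bdry_Int_cfaces[of "vstar v" "col v"] bdry_vstar_subset_cfaces[of v]
  unfolding minor_cell_bdry_def pi_op_def by blast

lemma toric_stabs_subset_cfaces:
  "S \<in> toric_stabs V T col tverts fverts tfaces c \<Longrightarrow> S \<subseteq> cfaces Fs col fverts c"
  unfolding toric_stabs_def
  by (erule xspan_subset) (use bdry_vstar bdry_vstar_subset_cfaces in fastforce)

lemma color_stab_subset: "S \<in> color_stabs V T tverts \<Longrightarrow> S \<subseteq> T"
  unfolding color_stabs_def by (erule xspan_subset) blast

lemma finite_color_stab: "S \<in> color_stabs V T tverts \<Longrightarrow> finite S"
  using color_stab_subset fin_T finite_subset by blast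

lemma toric_stabs_lift:
  "toric_stabs V T col tverts fverts tfaces c \<subseteq> bdry tfaces ` color_stabs V T tverts"
proof -
  let ?G = "vstar ` {v \<in> V. col v = c}"
  have "toric_stabs V T col tverts fverts tfaces c = xspan (bdry tfaces ` ?G)"
    unfolding toric_stabs_def image_image
    by (rule arg_cong, rule image_cong) (simp_all add: bdry_vstar)
  also have "\<dots> \<subseteq> bdry tfaces ` xspan ?G"
  proof (rule xspan_image_subset)
    show "bdry tfaces {} = {}" unfolding bdry_def msum_def by simp
    fix A g assume "A \<in> xspan ?G" "g \<in> ?G"
    moreover have "xspan ?G \<subseteq> color_stabs V T tverts"
      unfolding color_stabs_def by (rule xspan_mono) blast
    ultimately have "finite A" "finite g"
      using finite_color_stab fin_T by auto
    then show "bdry tfaces (sdiff A g) = sdiff (bdry tfaces A) (bdry tfaces g)"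
      by (rule bdry_sdiff)
  qed
  also have "\<dots> \<subseteq> bdry tfaces ` color_stabs V T tverts"
    unfolding color_stabs_def by (intro image_mono xspan_mono) blast
  finally show ?thesis .
qed

end

theorem theorem2:
  fixes V :: "'v set" and Fs :: "'f set" and T :: "'t set"
    and col :: "'v \<Rightarrow> color"
    and tverts :: "'t \<Rightarrow> 'v set" and fverts :: "'f \<Rightarrow> 'v set" and tfaces :: "'t \<Rightarrow> 'f set"
    and \<Omega> :: "'t set" and F :: "color \<Rightarrow> 'f set"
  assumes "colex_dual V Fs T col tverts fverts tfaces"
    and "\<Omega> \<subseteq> T"
    and "\<And>c. F c \<subseteq> cfaces Fs col fverts c"
    and "\<And>c. \<exists>S \<in> toric_stabs V T col tverts fverts tfaces c.
               F c = sdiff (pi_op col fverts tfaces c \<Omega>) S"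
  shows "\<exists>S \<in> color_stabs V T tverts. (\<Union>c. F c) = bdry tfaces (sdiff \<Omega> S)"
proof -
  interpret colex_dual V Fs T col tverts fverts tfaces by fact
  have "\<forall>c. \<exists>S. S \<in> toric_stabs V T col tverts fverts tfaces c \<and>
      F c = sdiff (pi_op col fverts tfaces c \<Omega>) S"
    using assms(4) by blast
  then obtain S where S: "\<And>c. S c \<in> toric_stabs V T col tverts fverts tfaces c"
    and F: "\<And>c. F c = sdiff (pi_op col fverts tfaces c \<Omega>) (S c)"
    by (auto dest!: choice)
  have "\<forall>c. \<exists>S'. S' \<in> color_stabs V T tverts \<and> bdry tfaces S' = S c"
    using toric_stabs_lift S by blast
  then obtain S' where S': "\<And>c. S' c \<in> color_stabs V T tverts"
    and bdry_S': "\<And>c. bdry tfaces (S' c) = S c"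
    by (auto dest!: choice)
  have stab: "color_sum S' \<in> color_stabs V T tverts"
    using S' unfolding color_stabs_def by (rule color_sum_in_xspan)
  have "finite \<Omega>" using assms(2) fin_T finite_subset by blast
  then have bdry_eq: "bdry tfaces (sdiff \<Omega> (color_sum S')) = sdiff (bdry tfaces \<Omega>) (color_sum S)"
    using finite_color_stab[OF S'] finite_color_stab[OF stab]
    by (simp add: bdry_sdiff bdry_color_sum bdry_S')
  have "F c = bdry tfaces (sdiff \<Omega> (color_sum S')) \<inter> cfaces Fs col fverts c" for c
    unfolding bdry_eq sdiff_Int_distrib bdry_Int_cfaces[OF assms(2)] F
    using color_sum_Int_disjoint[of S "cfaces Fs col fverts",
        OF toric_stabs_subset_cfaces[OF S] cfaces_disjoint]
    by simp
  moreover have "sdiff \<Omega> (color_sum S') \<subseteq> T"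
    using color_stab_subset[OF stab] assms(2) unfolding sdiff_def by blast
  ultimately have "(\<Union>c. F c) = bdry tfaces (sdiff \<Omega> (color_sum S'))"
    by (simp add: Union_cfaces Int_absorb2 bdry_subset_faces)
  with stab show ?thesis by blast
qed

end
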